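(* Let $p$ be an odd Ramanujan prime. Write $p=p_n$ and let $q$ be the smallest prime greater than $p/2$. Then all integers $\frac{p+1}{2},\frac{p+3}{2},\dots,\frac{p_{n+1}-1}{2}$ are composite, and the open interval $(p,2q)$ contains a prime.
   Context: $p_k$ denotes the $k$-th prime and $\pi(x)$ the number of primes $\le x$. For $n\ge 1$, the $n$-th Ramanujan prime $R_n$ is the smallest positive integer such that $\pi(x)-\pi(x/2)\ge n$ for all real $x\ge R_n$. A Ramanujan prime is a number of the form $R_n$ (these are primes: $2,11,17,29,41,\dots$). *)

theory Defs
  imports "HOL-Computational_Algebra.Primes" Complex_Main
begin

definition prime_pi :: "real \<Rightarrow> nat" where
  "prime_pi x = card {p::nat. prime p \<and> real p \<le> x}"

definition ramanujan_prop :: "nat \<Rightarrow> nat \<Rightarrow> bool" where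
  "ramanujan_prop n r \<longleftrightarrow> (\<forall>x::real. x \<ge> real r \<longrightarrow> prime_pi x - prime_pi (x / 2) \<ge> n)"

definition is_nth_ramanujan :: "nat \<Rightarrow> nat \<Rightarrow> bool" where
  "is_nth_ramanujan n r \<longleftrightarrow> r > 0 \<and> ramanujan_prop n r \<and> (\<forall>s. 0 < s \<and> s < r \<longrightarrow> \<not> ramanujan_prop n s)"

definition ramanujan_prime :: "nat \<Rightarrow> bool" where
  "ramanujan_prime r \<longleftrightarrow> (\<exists>n\<ge>1. is_nth_ramanujan n r)"

end

theory Submission
  imports Defs
begin

text \<open>Minimality of \<open>R\<^sub>n = p\<close> gives some \<open>x \<in> [p - 1, p)\<close> with \<open>\<pi>(x) - \<pi>(x/2) < n\<close>. If \<open>k\<close> is a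
  prime with \<open>p \<le> 2k\<close> and no prime lies in \<open>(p, 2k]\<close>, then passing from \<open>x\<close> to \<open>2k\<close> adds at most
  the prime \<open>p\<close> to \<open>\<pi>\<close>, while passing from \<open>x/2\<close> to \<open>k\<close> adds at least the prime \<open>k\<close>; hence
  \<open>\<pi>(2k) - \<pi>(k) < n\<close>, contradicting \<open>2k \<ge> R\<^sub>n\<close>. Both claims are instances: for \<open>k\<close> a prime in
  \<open>[(p+1)/2, (p\<^sub>n\<^sub>+\<^sub>1-1)/2]\<close>, and for \<open>k = q\<close>, where \<open>2q\<close> itself is not prime.\<close>

lemma finite_primes_le: "finite {p::nat. prime p \<and> real p \<le> x}"
proof (rule finite_subset)
  show "{p::nat. prime p \<and> real p \<le> x} \<subseteq> {..nat \<lceil>x\<rceil>}"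
  proof
    fix p assume "p \<in> {p::nat. prime p \<and> real p \<le> x}"
    then have "real p \<le> x" by simp
    then have "int p \<le> \<lceil>x\<rceil>" by (metis ceiling_mono ceiling_of_nat)
    then show "p \<in> {..nat \<lceil>x\<rceil>}" by simp
  qed
qed simp

lemma prime_pi_eq_0:
  assumes "x < 2" shows "prime_pi x = 0"
proof -
  have "{p::nat. prime p \<and> real p \<le> x} = {}"
    using assms by (auto dest: prime_ge_2_nat)
  then show ?thesis unfolding prime_pi_def by (metis card.empty)
qed

lemma prime_pi_le_Suc:
  assumes "\<forall>r. prime r \<and> x < real r \<and> real r \<le> y \<longrightarrow> r = a"
  shows "prime_pi y \<le> prime_pi x + 1"
proof -
  have "prime_pi y \<le> card (insert a {r::nat. prime r \<and> real r \<le> x})"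
    unfolding prime_pi_def
    by (rule card_mono) (use assms finite_primes_le in \<open>auto simp: not_le\<close>)
  also have "\<dots> \<le> prime_pi x + 1"
    by (simp add: prime_pi_def card_insert_if finite_primes_le)
  finally show ?thesis .
qed

lemma prime_pi_less:
  assumes "prime k" "x < real k" "real k \<le> y"
  shows "prime_pi x < prime_pi y"
proof -
  have "prime_pi x < card (insert k {r::nat. prime r \<and> real r \<le> x})"
    using assms(2) by (simp add: prime_pi_def finite_primes_le)
  also have "\<dots> \<le> prime_pi y"
    unfolding prime_pi_def
    by (rule card_mono) (use assms finite_primes_le in auto)
  finally show ?thesis .
qed

lemma nth_ramanujan_ge_2:
  assumes "is_nth_ramanujan n p" "n \<ge> 1"
  shows "p \<ge> 2"
proof (rule ccontr)
  assume "\<not> p \<ge> 2"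
  then have "real p < 2" by simp
  with assms(1) have "n \<le> prime_pi (real p) - prime_pi (real p / 2)"
    unfolding is_nth_ramanujan_def ramanujan_prop_def by blast
  with \<open>real p < 2\<close> assms(2) show False by (simp add: prime_pi_eq_0)
qed

lemma nth_ramanujan_deficit_below:
  assumes "is_nth_ramanujan n p" "p \<ge> 2"
  obtains x where "real p - 1 \<le> x" "x < real p" "prime_pi x - prime_pi (x / 2) < n"
proof -
  have "\<not> ramanujan_prop n (p - 1)"
    using assms unfolding is_nth_ramanujan_def by simp
  then obtain x where x: "real (p - 1) \<le> x" "prime_pi x - prime_pi (x / 2) < n"
    unfolding ramanujan_prop_def by (auto simp: not_le)
  have "x < real p"
    using assms(1) x(2) unfolding is_nth_ramanujan_def ramanujan_prop_def
    by (meson not_le not_less)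
  with x assms(2) show thesis by (intro that) (simp_all add: of_nat_diff)
qed

lemma nth_ramanujan_prime_between:
  assumes "is_nth_ramanujan n p" "n \<ge> 1" "prime k" "p \<le> 2 * k"
  shows "\<exists>r. prime r \<and> p < r \<and> r \<le> 2 * k"
proof (rule ccontr)
  assume no_prime: "\<not> (\<exists>r. prime r \<and> p < r \<and> r \<le> 2 * k)"
  have "p \<ge> 2" using assms(1,2) by (rule nth_ramanujan_ge_2)
  with assms(1) obtain x where x: "real p - 1 \<le> x" "x < real p"
    and deficit: "prime_pi x - prime_pi (x / 2) < n"
    by (rule nth_ramanujan_deficit_below)
  have "prime_pi (real (2 * k)) \<le> prime_pi x + 1"
  proof (rule prime_pi_le_Suc[where a = p], intro allI impI)
    fix r assume r: "prime r \<and> x < real r \<and> real r \<le> real (2 * k)"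
    with no_prime have "r \<le> p" by (meson not_le of_nat_le_iff)
    with r x show "r = p" by linarith
  qed
  moreover have "prime_pi (x / 2) < prime_pi (real (2 * k) / 2)"
    using assms(3,4) x(2) by (intro prime_pi_less[of k]) auto
  moreover have "real p \<le> real (2 * k)" using assms(4) by linarith
  with assms(1) have "n \<le> prime_pi (real (2 * k)) - prime_pi (real (2 * k) / 2)"
    unfolding is_nth_ramanujan_def ramanujan_prop_def by blast
  ultimately show False using deficit by linarith
qed

theorem lemma2:
  fixes p p' q :: nat
  assumes "ramanujan_prime p" and "odd p"
    and "prime p'" and "p < p'" and "\<forall>r. p < r \<and> r < p' \<longrightarrow> \<not> prime r"
    and "prime q" and "real q > real p / 2"
    and "\<forall>r. prime r \<and> real r > real p / 2 \<longrightarrow> q \<le> r"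
  shows "(\<forall>k. (p + 1) div 2 \<le> k \<and> k \<le> (p' - 1) div 2 \<longrightarrow> k > 1 \<and> \<not> prime k)
         \<and> (\<exists>r. prime r \<and> p < r \<and> r < 2 * q)"
proof -
  obtain n where n: "is_nth_ramanujan n p" "n \<ge> 1"
    using assms(1) unfolding ramanujan_prime_def by blast
  have "p \<ge> 3" using nth_ramanujan_ge_2[OF n] assms(2) by presburger
  have composite: "k > 1 \<and> \<not> prime k" if k: "(p + 1) div 2 \<le> k" "k \<le> (p' - 1) div 2" for k
  proof
    show "k > 1" using k \<open>p \<ge> 3\<close> by linarith
    show "\<not> prime k"
    proof
      assume "prime k"
      moreover have "p \<le> 2 * k" using k(1) by linarith
      ultimately obtain r where "prime r" "p < r" "r \<le> 2 * k"
        using nth_ramanujan_prime_between[OF n] by blast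
      moreover have "r < p'" using \<open>r \<le> 2 * k\<close> k(2) assms(4) by linarith
      ultimately show False using assms(5) by blast
    qed
  qed
  have "p \<le> 2 * q" using assms(7) by linarith
  with nth_ramanujan_prime_between[OF n assms(6)]
  obtain r where r: "prime r" "p < r" "r \<le> 2 * q" by blast
  have "r \<noteq> 2 * q"
    using r(1) prime_gt_1_nat[OF assms(6)] prime_product[of 2 q] by auto
  with r composite show ?thesis by auto
qed

end
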